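(* Let $q,q',n$ be integers with $q'\ge 2q>3$ and $n>1$. Let $S$ be an $\mathcal{OS}_q(n)$ of period $m$ with ring sequence $[s_0,\ldots,s_{m-1}]$, and for $x\in\mathbb{Z}_q$ let $x'$ denote the class in $\mathbb{Z}_{q'}$ of the integer in $\{0,\ldots,q-1\}$ representing $x$. Define $t_i\in\mathbb{Z}_{q'}$ for $0\le i\le m-1$ by $t_i=(-1)^{i+m-1}s_i'$ if $s_i'\neq 0$ and $t_i=(-1)^{i+m-1}q$ if $s_i'=0$. Let $T'$ be the periodic sequence over $\mathbb{Z}_{q'}$ with ring sequence $[t_0,\ldots,t_{m-1},-t_0,\ldots,-t_{m-1}]$. Then $T'$ is an $\mathcal{SOS}_{q'}(n)$ and $w_{q'}(T')=0$.
   Context: For a periodic sequence $S=(s_i)$ over $\mathbb{Z}_q$ write $\mathbf{s}_n(i)=(s_i,\ldots,s_{i+n-1})$; $\mathbf{u}^R$ denotes the reverse of a tuple and $-\mathbf{u}$ its termwise negative. An $n$-window sequence of period $m$ satisfies $\mathbf{s}_n(i)=\mathbf{s}_n(j)\Rightarrow i\equiv j\pmod m$. An $\mathcal{OS}_q(n)$ is an $n$-window sequence with $\mathbf{s}_n(i)\neq\mathbf{s}_n(j)^R$ for all $i,j$; an $\mathcal{SOS}_q(n)$ is an $\mathcal{OS}_q(n)$ with also $\mathbf{s}_n(i)\neq-\mathbf{s}_n(j)^R$ for all $i,j$. The ring sequence of a sequence of period $m$ is one period. The weight $w(S)$ is the integer sum of one period with terms taken in $\{0,\ldots,q-1\}$;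 $w_q(S)=w(S)\bmod q$. *)

theory Defs
  imports Main
begin

text \<open>Elements of Z_q are represented by their canonical integer representatives
in {0..<q}. A periodic sequence over Z_q is a function nat => int with values
in {0..<q}.\<close>

definition window :: "(nat \<Rightarrow> int) \<Rightarrow> nat \<Rightarrow> nat \<Rightarrow> int list" where
  "window s n i = map (\<lambda>k. s (i + k)) [0..<n]"

definition neg_tuple :: "int \<Rightarrow> int list \<Rightarrow> int list" where
  "neg_tuple q u = map (\<lambda>x. (- x) mod q) u"

definition seq_over :: "int \<Rightarrow> nat \<Rightarrow> (nat \<Rightarrow> int) \<Rightarrow> bool" where
  "seq_over q m s \<longleftrightarrow> (\<forall>i. 0 \<le> s i \<and> s i < q) \<and> 0 < m \<and> (\<forall>i. s (i + m) = s i)"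

definition n_window_seq :: "int \<Rightarrow> nat \<Rightarrow> nat \<Rightarrow> (nat \<Rightarrow> int) \<Rightarrow> bool" where
  "n_window_seq q n m s \<longleftrightarrow> seq_over q m s \<and>
     (\<forall>i j. window s n i = window s n j \<longrightarrow> i mod m = j mod m)"

definition OS :: "int \<Rightarrow> nat \<Rightarrow> nat \<Rightarrow> (nat \<Rightarrow> int) \<Rightarrow> bool" where
  "OS q n m s \<longleftrightarrow> n_window_seq q n m s \<and>
     (\<forall>i j. window s n i \<noteq> rev (window s n j))"

definition SOS :: "int \<Rightarrow> nat \<Rightarrow> nat \<Rightarrow> (nat \<Rightarrow> int) \<Rightarrow> bool" where
  "SOS q n m s \<longleftrightarrow> OS q n m s \<and>
     (\<forall>i j. window s n i \<noteq> neg_tuple q (rev (window s n j)))"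

definition weight :: "nat \<Rightarrow> (nat \<Rightarrow> int) \<Rightarrow> int" where
  "weight m s = (\<Sum>i<m. s i)"

definition wq :: "int \<Rightarrow> nat \<Rightarrow> (nat \<Rightarrow> int) \<Rightarrow> int" where
  "wq q m s = weight m s mod q"

definition t_seq :: "int \<Rightarrow> int \<Rightarrow> nat \<Rightarrow> (nat \<Rightarrow> int) \<Rightarrow> nat \<Rightarrow> int" where
  "t_seq q q' m s i = ((-1) ^ (i + m - 1) * (if s i mod q' \<noteq> 0 then s i else q)) mod q'"

definition T_seq :: "int \<Rightarrow> int \<Rightarrow> nat \<Rightarrow> (nat \<Rightarrow> int) \<Rightarrow> nat \<Rightarrow> int" where
  "T_seq q q' m s i = (let k = i mod (2 * m) in
      if k < m then t_seq q q' m s k else (- t_seq q q' m s (k - m)) mod q')"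

end

theory Submission
  imports Defs
begin

text \<open>Let \<open>x\<^sub>k \<in> {1..q}\<close> be the representative of \<open>s\<^sub>k\<close> (0 replaced by q). Every term
T(k) of T' is \<open>x\<^sub>k\<close> or \<open>q' - x\<^sub>k\<close>, and \<open>T(k + m) = -T(k)\<close>. As \<open>2q \<le> q'\<close>, folding \<open>[q, q')\<close> onto
\<open>(0, q]\<close> recovers \<open>x\<^sub>k\<close> from both T(k) and \<open>-T(k)\<close>, so a reversed, or negated and
reversed, window coincidence in T' yields a reversed one in S. Equal windows of T' at
positions congruent mod m but not mod 2m consist of self-negative terms \<open>q'/2 \<ge> q\<close>, which
decode to zeros of S; but a zero window is a palindrome. Finally \<open>T(k) + T(k + m) \<equiv> 0\<close>
mod q' makes the weight vanish.\<close>

definition pos_rep :: "int \<Rightarrow> int \<Rightarrow> int" where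
  "pos_rep q x = (if x = 0 then q else x)"

definition unsign :: "int \<Rightarrow> int \<Rightarrow> int \<Rightarrow> int" where
  "unsign q q' v = (if v \<le> q then v else q' - v)"

lemma pos_rep_bounds: "0 \<le> x \<Longrightarrow> x < q \<Longrightarrow> 1 \<le> pos_rep q x \<and> pos_rep q x \<le> q"
  unfolding pos_rep_def by auto

lemma inj_on_pos_rep: "inj_on (pos_rep q) {0..<q}"
  unfolding inj_on_def pos_rep_def by auto

lemma minus_mod_eq_diff: "0 < x \<Longrightarrow> x < b \<Longrightarrow> (- x) mod b = b - (x::int)"
  by (simp add: zmod_zminus1_eq_if)

lemma minus_mod_mem_pair:
  fixes x b v :: int
  assumes "0 < x" "x < b" "v \<in> {x, b - x}"
  shows "(- v) mod b \<in> {x, b - x}"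
proof -
  have "(- (b - x)) mod b = x"
    using assms(1,2) by (simp flip: mod_add_self2[of "x - b" b])
  then show ?thesis using assms by (auto simp: minus_mod_eq_diff)
qed

lemma sign_mult_mod_mem_pair:
  "0 < x \<Longrightarrow> x < b \<Longrightarrow> ((-1) ^ e * x) mod b \<in> {x, b - (x::int)}"
  by (cases "even e") (simp_all add: minus_mod_eq_diff)

lemma unsign_mem_pair:
  fixes x q q' v :: int
  assumes "1 \<le> x" "x \<le> q" "2 * q \<le> q'" "v \<in> {x, q' - x}"
  shows "unsign q q' v = x"
  using assms unfolding unsign_def by auto

lemma mem_pair_minus_mod_fixed:
  fixes x q q' v :: int
  assumes "1 \<le> x" "x \<le> q" "2 * q \<le> q'" "v \<in> {x, q' - x}" "(- v) mod q' = v"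
  shows "x = q"
proof -
  have "0 < v" "v < q'" using assms(1-4) by auto
  then have "q' = 2 * v" using assms(5) by (simp add: minus_mod_eq_diff)
  then show ?thesis using assms(1-4) by auto
qed

lemma periodic_mod:
  fixes s :: "nat \<Rightarrow> 'a" and p :: nat
  shows "(\<And>i. s (i + p) = s i) \<Longrightarrow> s (i mod p) = s i"
proof -
  assume per: "\<And>i. s (i + p) = s i"
  have "s (j + p * d) = s j" for j d
  proof (induction d)
    case (Suc d)
    have "s (j + p * Suc d) = s ((j + p * d) + p)" by (simp add: ac_simps)
    then show ?case using Suc per by simp
  qed simp
  from this[of "i mod p" "i div p"] show ?thesis by simp
qed

lemma window_periodic:
  fixes p :: nat
  assumes "\<And>i. s (i + p) = s i" "i mod p = j mod p"
  shows "window s n i = window s n j"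
proof -
  have "(i + k) mod p = (j + k) mod p" for k
    using assms(2) by (metis mod_add_left_eq)
  then show ?thesis
    unfolding window_def by (metis (no_types) periodic_mod[of s p, OF assms(1)])
qed

lemma sum_lessThan_add: "(\<Sum>k<a + p. f k) = (\<Sum>k<a. f k) + (\<Sum>k<p. f (a + k))"
  for f :: "nat \<Rightarrow> 'a::comm_monoid_add"
  by (induction p) (simp_all add: add.assoc)

lemma mod_double_add:
  fixes k m :: nat
  shows "(k + m) mod (2 * m) = (if k mod (2 * m) < m then k mod (2 * m) + m else k mod (2 * m) - m)"
proof (cases "m = 0")
  case False
  define r where "r = k mod (2 * m)"
  have "r < 2 * m" unfolding r_def using False by simp
  have "(k + m) mod (2 * m) = (r + m) mod (2 * m)" unfolding r_def by (simp add: mod_add_left_eq)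
  also have "\<dots> = (if r < m then r + m else r - m)"
  proof (cases "r < m")
    case False
    then have "r + m = (r - m) + 2 * m" by simp
    then have "(r + m) mod (2 * m) = ((r - m) + 2 * m) mod (2 * m)" by (rule arg_cong)
    also have "\<dots> = r - m" using \<open>r < 2 * m\<close> by (simp only: mod_add_self2) simp
    finally show ?thesis using False by simp
  qed simp
  finally show ?thesis unfolding r_def .
qed simp

lemma mod_double_other:
  fixes i j m :: nat
  assumes "i mod m = j mod m" "i mod (2 * m) \<noteq> j mod (2 * m)"
  shows "j mod (2 * m) = (i + m) mod (2 * m)"
proof -
  have "m \<noteq> 0"
  proof
    assume "m = 0"
    with assms show False by simp
  qed
  then have mod_m: "x mod m = (if x < m then x else x - m)" if "x < 2 * m" for x
    using that by (simp add: mod_if[of x])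
  define r r' where "r = i mod (2 * m)" and "r' = j mod (2 * m)"
  have "r < 2 * m" "r' < 2 * m" unfolding r_def r'_def using \<open>m \<noteq> 0\<close> by simp_all
  moreover have "r mod m = r' mod m"
    unfolding r_def r'_def using assms(1) by (simp add: mod_mod_cancel)
  ultimately have "r' = (if r < m then r + m else r - m)"
    using mod_m[of r] mod_m[of r'] assms(2) unfolding r_def[symmetric] r'_def[symmetric]
    by (auto split: if_splits)
  then show ?thesis unfolding mod_double_add r_def r'_def .
qed

locale signed_lift =
  fixes q q' :: int and m :: nat and s :: "nat \<Rightarrow> int"
  assumes seq: "seq_over q m s" and q'_ge: "2 * q \<le> q'"
begin

abbreviation T :: "nat \<Rightarrow> int" where
  "T \<equiv> T_seq q q' m s"

lemma m_pos: "0 < m"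
  using seq unfolding seq_over_def by simp

lemma s_bounds: "0 \<le> s k \<and> s k < q"
  using seq unfolding seq_over_def by simp

lemma s_periodic: "s (k + m) = s k"
  using seq unfolding seq_over_def by simp

lemma q'_pos: "0 < q'"
  using s_bounds[of 0] q'_ge by simp

lemma pos_rep_s_bounds: "1 \<le> pos_rep q (s k) \<and> pos_rep q (s k) \<le> q"
  using pos_rep_bounds s_bounds by blast

lemma t_seq_eq: "t_seq q q' m s k = ((-1) ^ (k + m - 1) * pos_rep q (s k)) mod q'"
proof -
  have "s k mod q' = s k" using s_bounds[of k] q'_ge by simp
  then show ?thesis unfolding t_seq_def pos_rep_def by simp
qed

lemma T_seq_shift: "T (k + m) = (- T k) mod q'"
proof -
  define r where "r = k mod (2 * m)"
  have r_less: "r < 2 * m" unfolding r_def using m_pos by simp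
  show ?thesis
  proof (cases "r < m")
    case True
    then show ?thesis unfolding T_seq_def Let_def mod_double_add r_def[symmetric] by simp
  next
    case False
    have "0 \<le> t_seq q q' m s (r - m)" "t_seq q q' m s (r - m) < q'"
      unfolding t_seq_def using q'_pos by simp_all
    moreover have "r - m < m" using r_less by simp
    ultimately show ?thesis using False
      unfolding T_seq_def Let_def mod_double_add r_def[symmetric]
      by (simp add: mod_minus_eq)
  qed
qed

lemma T_seq_mem_pair: "T k \<in> {pos_rep q (s k), q' - pos_rep q (s k)}"
proof -
  define r where "r = k mod (2 * m)"
  have r_less: "r < 2 * m" unfolding r_def using m_pos by simp
  have "s r = s k"
    unfolding r_def using periodic_mod[of s m, OF s_periodic]
    by (metis dvd_triv_right mod_mod_cancel)
  have bounds: "0 < pos_rep q (s j)" "pos_rep q (s j) < q'" for j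
    using pos_rep_s_bounds[of j] q'_ge by auto
  show ?thesis
  proof (cases "r < m")
    case True
    then show ?thesis using \<open>s r = s k\<close> sign_mult_mod_mem_pair[OF bounds]
      unfolding T_seq_def Let_def r_def[symmetric] t_seq_eq by simp
  next
    case False
    then have "s (r - m) = s k" using \<open>s r = s k\<close> s_periodic[of "r - m"] by simp
    then show ?thesis using False minus_mod_mem_pair[OF bounds sign_mult_mod_mem_pair[OF bounds]]
      unfolding T_seq_def Let_def r_def[symmetric] t_seq_eq by simp
  qed
qed

lemma T_seq_bounds: "0 \<le> T k \<and> T k < q'"
  using T_seq_mem_pair[of k] pos_rep_s_bounds[of k] q'_ge by auto

lemma unsign_T_seq: "unsign q q' (T k) = pos_rep q (s k)"
  using unsign_mem_pair[OF _ _ q'_ge T_seq_mem_pair] pos_rep_s_bounds by blast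

lemma T_seq_minus_mod_fixed: "(- T k) mod q' = T k \<Longrightarrow> s k = 0"
proof -
  assume "(- T k) mod q' = T k"
  with pos_rep_s_bounds[of k] have "pos_rep q (s k) = q"
    using mem_pair_minus_mod_fixed[OF _ _ q'_ge T_seq_mem_pair] by blast
  then show ?thesis using s_bounds[of k] unfolding pos_rep_def by (auto split: if_splits)
qed

lemma window_T_seq_shift: "window T n (i + m) = neg_tuple q' (window T n i)"
proof -
  have "T (i + m + k) = (- T (i + k)) mod q'" for k
    using T_seq_shift[of "i + k"] by (simp add: ac_simps)
  then show ?thesis unfolding window_def neg_tuple_def by simp
qed

lemma map_unsign_window_T_seq: "map (unsign q q') (window T n i) = map (pos_rep q) (window s n i)"
  unfolding window_def using unsign_T_seq by simp

lemma inj_on_pos_rep_windows: "inj_on (pos_rep q) (set (window s n i) \<union> set (window s n j))"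
proof (rule inj_on_subset[OF inj_on_pos_rep])
  show "set (window s n i) \<union> set (window s n j) \<subseteq> {0..<q}"
    unfolding window_def using s_bounds by auto
qed

lemma window_T_seq_eqD:
  assumes "window T n i = window T n j"
  shows "window s n i = window s n j"
proof -
  have "map (pos_rep q) (window s n i) = map (pos_rep q) (window s n j)"
    using assms by (simp flip: map_unsign_window_T_seq)
  then show ?thesis using inj_on_map_eq_map[OF inj_on_pos_rep_windows] by blast
qed

lemma window_T_seq_rev_eqD:
  assumes "window T n i = rev (window T n j)"
  shows "window s n i = rev (window s n j)"
proof -
  have "map (pos_rep q) (window s n i) = map (pos_rep q) (rev (window s n j))"
    using assms map_unsign_window_T_seq[of n i] map_unsign_window_T_seq[of n j]
    by (simp flip: rev_map)
  moreover have "inj_on (pos_rep q) (set (window s n i) \<union> set (rev (window s n j)))"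
    using inj_on_pos_rep_windows by simp
  ultimately show ?thesis using inj_on_map_eq_map by blast
qed

lemma T_seq_periodic: "T (i + 2 * m) = T i"
  unfolding T_seq_def by simp

lemma seq_over_T_seq: "seq_over q' (2 * m) T"
  unfolding seq_over_def using T_seq_bounds m_pos T_seq_periodic by simp

lemma window_T_seq_self_negD:
  assumes "window T n j = neg_tuple q' (window T n j)"
  shows "window s n j = replicate n 0"
proof (rule nth_equalityI)
  fix k assume "k < length (window s n j)"
  then have "k < n" unfolding window_def by simp
  then have "(- T (j + k)) mod q' = T (j + k)"
    using arg_cong[OF assms, of "\<lambda>u. u ! k"] unfolding window_def neg_tuple_def by simp
  with \<open>k < n\<close> show "window s n j ! k = replicate n 0 ! k"
    unfolding window_def using T_seq_minus_mod_fixed by simp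
qed (simp add: window_def)

lemma window_T_seq_eq_imp_mod_eq:
  assumes os: "OS q n m s" and eq: "window T n i = window T n j"
  shows "i mod (2 * m) = j mod (2 * m)"
proof (rule ccontr)
  assume ne: "i mod (2 * m) \<noteq> j mod (2 * m)"
  have "window s n i = window s n j" using window_T_seq_eqD[OF eq] .
  then have "i mod m = j mod m" using os unfolding OS_def n_window_seq_def by blast
  then have "j mod (2 * m) = (i + m) mod (2 * m)" using mod_double_other ne by blast
  then have "window T n j = window T n (i + m)" using window_periodic T_seq_periodic by metis
  also have "\<dots> = neg_tuple q' (window T n j)" using window_T_seq_shift eq by simp
  finally have "window s n j = replicate n 0" by (rule window_T_seq_self_negD)
  then have "window s n j = rev (window s n j)" by simp
  then show False using os unfolding OS_def by blast
qed

lemma window_T_seq_rev_neq: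
  assumes "OS q n m s"
  shows "window T n i \<noteq> rev (window T n j)"
  using window_T_seq_rev_eqD assms unfolding OS_def by blast

lemma SOS_T_seq:
  assumes os: "OS q n m s"
  shows "SOS q' n (2 * m) T"
proof -
  have "neg_tuple q' (rev (window T n j)) = rev (window T n (j + m))" for j
    using window_T_seq_shift by (simp add: neg_tuple_def rev_map)
  then have "window T n i \<noteq> neg_tuple q' (rev (window T n j))" for i j
    using window_T_seq_rev_neq[OF os] by simp
  then show ?thesis
    unfolding SOS_def OS_def n_window_seq_def
    using seq_over_T_seq window_T_seq_eq_imp_mod_eq[OF os] window_T_seq_rev_neq[OF os] by blast
qed

lemma wq_T_seq: "wq q' (2 * m) T = 0"
proof -
  have "weight (2 * m) T = (\<Sum>k<m. T k + (- T k) mod q')"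
    unfolding weight_def mult_2 sum_lessThan_add
    by (simp add: sum.distrib add.commute[of m] T_seq_shift)
  also have "\<dots> mod q' = 0"
    by (subst mod_sum_eq[symmetric]) (simp add: mod_add_right_eq)
  finally show ?thesis unfolding wq_def .
qed

end

theorem theorem3p15:
  fixes q q' :: int and n m :: nat and s :: "nat \<Rightarrow> int"
  assumes "q' \<ge> 2 * q" and "2 * q > 3" and "n > 1"
    and "OS q n m s"
  shows "SOS q' n (2 * m) (T_seq q q' m s) \<and> wq q' (2 * m) (T_seq q q' m s) = 0"
proof -
  have "seq_over q m s" using assms(4) unfolding OS_def n_window_seq_def by simp
  then interpret signed_lift q q' m s using assms(1) by unfold_locales
  show ?thesis using SOS_T_seq[OF assms(4)] wq_T_seq by blast
qed

end
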